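(* In the network model described in the context, let $\pi$ be an admissible cyclic policy with maximum inter-scheduling times $(k_e^{\pi})_{e\in E}$ and slice widths $(w_{i,e})$. If \begin{itemize} \item $\sum_{e\in\mathcal{T}^{(i)}}k_e^{\pi}\le\tau_i$ for all $f_i\in\mathcal{F}$, \item $\sum_{f_i:e\in\mathcal{T}^{(i)}}w_{i,e}\le c_e$ for all $e\in E$, \item $w_{i,e}=\lambda_i k_e^{\pi}$ for all $f_i\in\mathcal{F}$, $e\in\mathcal{T}^{(i)}$, \item $\mu^\pi(t)\in\mathcal{M}$ for all $0\le t<K^\pi$, \end{itemize} then $\pi$ supports $\mathcal{F}$. Furthermore, if in addition $\pi$ is a regular schedule, then all slices equal their bottleneck values, i.e. $w_{i,e}=\lambda_i/\bar{\mu}^\pi_e$ for all $f_i\in\mathcal{F}$, $e\in\mathcal{T}^{(i)}$.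
   Context: Network model: directed graph $G=(V,E)$, slotted time, link capacities $c_e$, interference given by a conflict graph on links with feasible activation sets $\mathcal{M}$ (its independent sets). Flows $f_i\in\mathcal{F}$ have fixed routes $\mathcal{T}^{(i)}$, deterministic fluid arrival rates $\lambda_i>0$ per slot at the source (arrivals during slots $0\le t\le T$), and deadlines $\tau_i$. Link $e\in\mathcal{T}^{(i)}$ reserves a slice $w_{i,e}$ for $f_i$ with its own FCFS queue (initially empty). An admissible policy activates $\mu^\pi(t)\in\mathcal{M}$ each slot and is work-conserving (an activated link serves $\min\{Q_{i,e}(t),w_{i,e}\}$ from each slice queue; served units proceed to the next link). A cyclic policy satisfies $\mu^\pi(t)=\mu^\pi(t+K^\pi)$ for all $t\ge0$; $\bar{\mu}^\pi_e=\frac1{K^\pi}\sum_{t=0}^{K^\pi-1}\mu^\pi_e(t)$. The maximum inter-scheduling time $k_e^\pi$ of link $e$ is the largest number of slots between two consecutive activations of $e$ (cyclically). $\pi$ is a regular schedule if $k^\pi_e=1/\bar{\mu}^\pi_e$ for all $e\in E$ (all inter-scheduling times of each link are equal). A policy supports $\mathcal{F}$ iff every packet of every flow $f_i$ is delivered to its destination within $\tau_i$ slots of its arrival, for any finite horizon $T$. *)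

theory Defs
  imports Complex_Main "HOL-Library.Extended_Nat"
begin

definition conflict_graph :: "('v \<times> 'v) set \<Rightarrow> (('v \<times> 'v) \<Rightarrow> ('v \<times> 'v) \<Rightarrow> bool) \<Rightarrow> bool" where
  "conflict_graph E cf \<longleftrightarrow> (\<forall>a b. cf a b \<longrightarrow> a \<in> E \<and> b \<in> E \<and> a \<noteq> b \<and> cf b a)"

text \<open>Feasible activation sets M: independent sets of the conflict graph.\<close>
definition indep_sets :: "('v \<times> 'v) set \<Rightarrow> (('v \<times> 'v) \<Rightarrow> ('v \<times> 'v) \<Rightarrow> bool) \<Rightarrow> ('v \<times> 'v) set set" where
  "indep_sets E cf = {S. S \<subseteq> E \<and> (\<forall>a\<in>S. \<forall>b\<in>S. \<not> cf a b)}"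

definition valid_route :: "('v \<times> 'v) set \<Rightarrow> ('v \<times> 'v) list \<Rightarrow> bool" where
  "valid_route E r \<longleftrightarrow> r \<noteq> [] \<and> set r \<subseteq> E \<and> distinct r \<and>
     (\<forall>j. Suc j < length r \<longrightarrow> snd (r ! j) = fst (r ! Suc j))"

definition cyclic_policy :: "(nat \<Rightarrow> 'e set) \<Rightarrow> nat \<Rightarrow> bool" where
  "cyclic_policy mu K \<longleftrightarrow> 0 < K \<and> (\<forall>t. mu (t + K) = mu t)"

definition next_act :: "(nat \<Rightarrow> 'e set) \<Rightarrow> 'e \<Rightarrow> nat \<Rightarrow> nat" where
  "next_act mu e t = (LEAST s. t < s \<and> e \<in> mu s)"

definition max_inter_sched :: "(nat \<Rightarrow> 'e set) \<Rightarrow> nat \<Rightarrow> 'e \<Rightarrow> enat" where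
  "max_inter_sched mu K e =
     (if \<exists>t<K. e \<in> mu t
      then enat (Max {next_act mu e t - t | t. t < K \<and> e \<in> mu t})
      else \<infinity>)"

definition mean_act :: "(nat \<Rightarrow> 'e set) \<Rightarrow> nat \<Rightarrow> 'e \<Rightarrow> real" where
  "mean_act mu K e = real (card {t. t < K \<and> e \<in> mu t}) / real K"

text \<open>Regular schedule: k_e = 1 / mu-bar_e for every link (infinity = 1/0 for unused links).\<close>
definition regular_schedule :: "'e set \<Rightarrow> (nat \<Rightarrow> 'e set) \<Rightarrow> nat \<Rightarrow> bool" where
  "regular_schedule E mu K \<longleftrightarrow>
     (\<forall>e\<in>E. case max_inter_sched mu K e of
                enat n \<Rightarrow> real n = 1 / mean_act mu K e
              | \<infinity> \<Rightarrow> mean_act mu K e = 0)"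

text \<open>Fluid dynamics. q i j is the backlog of flow i's slice queue at the j-th link of its
  route. Work-conserving service in slot t; served units and fresh arrivals of slot t join
  the respective queue at the end of slot t.\<close>
definition serve :: "('f \<Rightarrow> 'e list) \<Rightarrow> ('f \<Rightarrow> 'e \<Rightarrow> real) \<Rightarrow> (nat \<Rightarrow> 'e set)
    \<Rightarrow> ('f \<Rightarrow> nat \<Rightarrow> real) \<Rightarrow> nat \<Rightarrow> 'f \<Rightarrow> nat \<Rightarrow> real" where
  "serve route w mu q t i j =
     (if j < length (route i) \<and> route i ! j \<in> mu t then min (q i j) (w i (route i ! j)) else 0)"

definition inflow :: "('f \<Rightarrow> 'e list) \<Rightarrow> ('f \<Rightarrow> real) \<Rightarrow> nat \<Rightarrow> ('f \<Rightarrow> 'e \<Rightarrow> real)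
    \<Rightarrow> (nat \<Rightarrow> 'e set) \<Rightarrow> ('f \<Rightarrow> nat \<Rightarrow> real) \<Rightarrow> nat \<Rightarrow> 'f \<Rightarrow> nat \<Rightarrow> real" where
  "inflow route lam T w mu q t i j =
     (if j = 0 then (if t \<le> T then lam i else 0)
      else if j < length (route i) then serve route w mu q t i (j - 1) else 0)"

primrec queues :: "('f \<Rightarrow> 'e list) \<Rightarrow> ('f \<Rightarrow> real) \<Rightarrow> nat \<Rightarrow> ('f \<Rightarrow> 'e \<Rightarrow> real)
    \<Rightarrow> (nat \<Rightarrow> 'e set) \<Rightarrow> nat \<Rightarrow> 'f \<Rightarrow> nat \<Rightarrow> real" where
  "queues route lam T w mu 0 = (\<lambda>i j. 0)"
| "queues route lam T w mu (Suc t) =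
     (let q = queues route lam T w mu t in
      (\<lambda>i j. q i j - serve route w mu q t i j + inflow route lam T w mu q t i j))"

definition arrived :: "('f \<Rightarrow> real) \<Rightarrow> nat \<Rightarrow> 'f \<Rightarrow> nat \<Rightarrow> real" where
  "arrived lam T i t = (\<Sum>s\<le>t. if s \<le> T then lam i else 0)"

definition delivered :: "('f \<Rightarrow> 'e list) \<Rightarrow> ('f \<Rightarrow> real) \<Rightarrow> nat \<Rightarrow> ('f \<Rightarrow> 'e \<Rightarrow> real)
    \<Rightarrow> (nat \<Rightarrow> 'e set) \<Rightarrow> 'f \<Rightarrow> nat \<Rightarrow> real" where
  "delivered route lam T w mu i t =
     (\<Sum>s\<le>t. serve route w mu (queues route lam T w mu s) s i (length (route i) - 1))"

text \<open>The policy supports F: for every finite horizon T, all fluid of flow i arriving in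
  slot t is delivered by slot t + tau_i (FIFO fluid, so cumulative comparison).\<close>
definition supports :: "'f set \<Rightarrow> ('f \<Rightarrow> 'e list) \<Rightarrow> ('f \<Rightarrow> real) \<Rightarrow> ('f \<Rightarrow> nat)
    \<Rightarrow> ('f \<Rightarrow> 'e \<Rightarrow> real) \<Rightarrow> (nat \<Rightarrow> 'e set) \<Rightarrow> bool" where
  "supports F route lam tau w mu \<longleftrightarrow>
     (\<forall>T. \<forall>i\<in>F. \<forall>t. arrived lam T i t \<le> delivered route lam T w mu i (t + tau i))"

end

theory Submission
  imports Defs
begin

text \<open>Each hop of a route serves its slice queue at rate \<open>w = \<lambda> k\<close> in every window of
  \<open>k\<close> consecutive slots, where \<open>k\<close> is the maximum inter-scheduling time of the link. A
  work-conserving queue that receives at most \<open>w\<close> per \<open>k\<close> slots therefore delays the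
  cumulative arrival curve by at most \<open>k\<close> slots, and the delays add up along the route to
  \<open>\<Sum> k\<^sub>e \<le> \<tau>\<close>. The regularity claim is just \<open>k\<^sub>e = 1 / \<mu>\<^sub>e\<close>. The capacity and
  interference hypotheses only make the policy admissible; the delay bound does not need them.\<close>

lemma cyclic_policy_shift:
  assumes "cyclic_policy mu K"
  shows "mu (t + q * K) = mu t"
proof (induction q)
  case 0
  show ?case by simp
next
  case (Suc q)
  have "mu (t + Suc q * K) = mu ((t + q * K) + K)" by (simp add: algebra_simps)
  also have "\<dots> = mu (t + q * K)" using assms unfolding cyclic_policy_def by blast
  finally show ?case using Suc by simp
qed

lemma cyclic_policy_mod:
  assumes "cyclic_policy mu K"
  shows "mu (t mod K) = mu t"
  using cyclic_policy_shift[OF assms, of "t mod K" "t div K"] by simp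

lemma max_inter_sched_gap:
  assumes cyc: "cyclic_policy mu K" and k: "max_inter_sched mu K e = enat k"
    and b: "e \<in> mu b"
  shows "\<exists>a. b < a \<and> a \<le> b + k \<and> e \<in> mu a"
proof -
  have "0 < K" using cyc unfolding cyclic_policy_def by blast
  define t where "t = b mod K"
  have t: "t < K" "e \<in> mu t"
    using \<open>0 < K\<close> b cyclic_policy_mod[OF cyc, of b] by (auto simp: t_def)
  have "e \<in> mu (t + K)" using cyc t(2) unfolding cyclic_policy_def by simp
  then have a: "t < next_act mu e t" "e \<in> mu (next_act mu e t)"
    using LeastI[of "\<lambda>s. t < s \<and> e \<in> mu s" "t + K"] \<open>0 < K\<close> unfolding next_act_def by auto
  have "finite {next_act mu e t - t | t. t < K \<and> e \<in> mu t}"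
    by (rule finite_subset[of _ "(\<lambda>t. next_act mu e t - t) ` {..<K}"]) auto
  then have "next_act mu e t - t \<le> k"
    using k t unfolding max_inter_sched_def by (auto split: if_splits intro: Max_ge)
  moreover have "b = t + b div K * K" by (simp add: t_def)
  moreover have "mu (next_act mu e t + b div K * K) = mu (next_act mu e t)"
    by (rule cyclic_policy_shift[OF cyc])
  ultimately show ?thesis
    using a by (intro exI[of _ "next_act mu e t + b div K * K"]) auto
qed

text \<open>The last activation before \<open>s + K\<close> exists since \<open>e\<close> is active in the first period;
  the activation following it lies in \<open>[s + K, s + K + k)\<close>, one period after the window.\<close>

lemma max_inter_sched_window:
  assumes cyc: "cyclic_policy mu K" and k: "max_inter_sched mu K e = enat k"
  shows "\<exists>a. s \<le> a \<and> a < s + k \<and> e \<in> mu a"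
proof -
  obtain t0 where "t0 < K" "e \<in> mu t0"
    using k unfolding max_inter_sched_def by (auto split: if_splits)
  define S where "S = {b. b < s + K \<and> e \<in> mu b}"
  have "finite S" by (rule finite_subset[of _ "{..<s + K}"]) (auto simp: S_def)
  moreover have "t0 \<in> S" using \<open>t0 < K\<close> \<open>e \<in> mu t0\<close> by (simp add: S_def)
  ultimately have last: "Max S \<in> S" and "\<forall>b\<in>S. b \<le> Max S" by (auto intro: Max_in)
  obtain a where a: "Max S < a" "a \<le> Max S + k" "e \<in> mu a"
    using max_inter_sched_gap[OF cyc k, of "Max S"] last by (auto simp: S_def)
  have "s + K \<le> a"
  proof (rule ccontr)
    assume "\<not> s + K \<le> a"
    then have "a \<in> S" using a(3) by (simp add: S_def)
    then show False using a(1) \<open>\<forall>b\<in>S. b \<le> Max S\<close> by auto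
  qed
  moreover have "mu (a - K + 1 * K) = mu (a - K)" by (rule cyclic_policy_shift[OF cyc])
  ultimately show ?thesis
    using a last by (intro exI[of _ "a - K"]) (auto simp: S_def)
qed

text \<open>A single work-conserving queue: \<open>A\<close> and \<open>D\<close> are its cumulative input and
  output, \<open>B\<close> an arrival curve that \<open>A\<close> follows with lag \<open>P\<close>.\<close>

lemma work_conserving_lag:
  fixes A D B :: "nat \<Rightarrow> real" and act :: "nat \<Rightarrow> bool"
  assumes D0: "D 0 = 0"
    and D_Suc: "\<And>t. D (Suc t) = D t + (if act t then min (A t - D t) cap else 0)"
    and cap: "0 \<le> cap"
    and A_mono: "mono A" and A0: "0 \<le> A 0"
    and window: "\<And>s. \<exists>a. s \<le> a \<and> a < s + k \<and> act a"
    and A_lag: "\<And>t. B (t - P) \<le> A t"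
    and B_increment: "\<And>x. B x \<le> B (x - k) + cap"
    and B0: "B 0 \<le> 0" and B_mono: "mono B"
  shows "mono D" and "B (t - (P + k)) \<le> D t"
proof -
  have D_le_A: "D t \<le> A t" for t
  proof (induction t)
    case 0
    show ?case using D0 A0 by simp
  next
    case (Suc t)
    have "A t \<le> A (Suc t)" using A_mono by (simp add: monoD)
    then show ?case using Suc D_Suc[of t] by auto
  qed
  show D_mono: "mono D" unfolding mono_iff_le_Suc using D_Suc D_le_A cap by simp
  show "B (t - (P + k)) \<le> D t"
  proof (induction t rule: less_induct)
    case (less t)
    show ?case
    proof (cases "t \<le> P + k")
      case True
      then show ?thesis using B0 D0 monoD[OF D_mono, of 0 t] by simp
    next
      case False
      obtain a where a: "t - k \<le> a" "a < t" "act a"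
        using window[of "t - k"] False by force
      have "B (t - (P + k)) \<le> D (Suc a)"
      proof (cases "A a - D a \<le> cap")
        case True
        then have "D (Suc a) = A a" using D_Suc[of a] a by simp
        moreover have "B (t - (P + k)) \<le> B (a - P)" using monoD[OF B_mono] a by simp
        ultimately show ?thesis using A_lag[of a] by simp
      next
        case False
        then have "D (Suc a) = D a + cap" using D_Suc[of a] a by simp
        moreover have "B (a - (P + k)) \<le> D a" using less a by blast
        moreover have "B (t - (P + k) - k) \<le> B (a - (P + k))" using monoD[OF B_mono] a by simp
        ultimately show ?thesis using B_increment[of "t - (P + k)"] by simp
      qed
      also have "\<dots> \<le> D t" using monoD[OF D_mono, of "Suc a" t] a by simp
      finally show ?thesis .
    qed
  qed
qed

definition received :: "('f \<Rightarrow> 'e list) \<Rightarrow> ('f \<Rightarrow> real) \<Rightarrow> nat \<Rightarrow> ('f \<Rightarrow> 'e \<Rightarrow> real)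
    \<Rightarrow> (nat \<Rightarrow> 'e set) \<Rightarrow> 'f \<Rightarrow> nat \<Rightarrow> nat \<Rightarrow> real" where
  "received route lam T w mu i j t =
     (\<Sum>u<t. inflow route lam T w mu (queues route lam T w mu u) u i j)"

definition served :: "('f \<Rightarrow> 'e list) \<Rightarrow> ('f \<Rightarrow> real) \<Rightarrow> nat \<Rightarrow> ('f \<Rightarrow> 'e \<Rightarrow> real)
    \<Rightarrow> (nat \<Rightarrow> 'e set) \<Rightarrow> 'f \<Rightarrow> nat \<Rightarrow> nat \<Rightarrow> real" where
  "served route lam T w mu i j t =
     (\<Sum>u<t. serve route w mu (queues route lam T w mu u) u i j)"

definition arrival_curve :: "real \<Rightarrow> nat \<Rightarrow> nat \<Rightarrow> real" where
  "arrival_curve a T t = a * real (min t (Suc T))"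

lemma queues_eq_received_minus_served:
  "queues route lam T w mu t i j =
     received route lam T w mu i j t - served route lam T w mu i j t"
  unfolding received_def served_def by (induction t arbitrary: i j) (simp_all add: Let_def)

lemma served_Suc:
  assumes "j < length (route i)"
  shows "served route lam T w mu i j (Suc t) = served route lam T w mu i j t +
    (if route i ! j \<in> mu t
     then min (received route lam T w mu i j t - served route lam T w mu i j t) (w i (route i ! j))
     else 0)"
  using assms queues_eq_received_minus_served[of route lam T w mu t i j]
  by (simp add: served_def serve_def)

lemma received_source: "received route lam T w mu i 0 = arrival_curve (lam i) T"
proof
  fix t
  show "received route lam T w mu i 0 t = arrival_curve (lam i) T t"
  proof (induction t)
    case 0
    show ?case by (simp add: received_def arrival_curve_def)
  next
    case (Suc t)
    then show ?case
      by (cases "t \<le> T") (auto simp: received_def arrival_curve_def inflow_def algebra_simps)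
  qed
qed

lemma received_next_hop:
  "Suc j < length (route i) \<Longrightarrow>
     received route lam T w mu i (Suc j) = served route lam T w mu i j"
  by (rule ext) (simp add: received_def served_def inflow_def)

lemma arrival_curve_mono: "0 \<le> a \<Longrightarrow> mono (arrival_curve a T)"
  unfolding arrival_curve_def by (auto intro!: monoI mult_left_mono)

lemma arrival_curve_increment:
  assumes "0 \<le> a"
  shows "arrival_curve a T x \<le> arrival_curve a T (x - k) + a * real k"
proof -
  have "real (min x (Suc T)) \<le> real (min (x - k) (Suc T)) + real k" by linarith
  then show ?thesis
    using mult_left_mono[OF _ assms] by (fastforce simp: arrival_curve_def algebra_simps)
qed

lemma served_lag_at_hop:
  assumes cyc: "cyclic_policy mu K" and lam: "0 \<le> lam i" and j: "j < length (route i)"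
    and k: "max_inter_sched mu K (route i ! j) = enat k"
    and w: "w i (route i ! j) = lam i * real k"
    and received_mono: "mono (received route lam T w mu i j)"
    and received_lag: "\<And>t. arrival_curve (lam i) T (t - P) \<le> received route lam T w mu i j t"
  shows "mono (served route lam T w mu i j)"
    and "arrival_curve (lam i) T (t - (P + k)) \<le> served route lam T w mu i j t"
proof -
  let ?A = "received route lam T w mu i j" and ?D = "served route lam T w mu i j"
    and ?B = "arrival_curve (lam i) T"
  have "?D (Suc t) = ?D t + (if route i ! j \<in> mu t then min (?A t - ?D t) (w i (route i ! j)) else 0)"
    for t using j by (rule served_Suc)
  moreover have "?B x \<le> ?B (x - k) + w i (route i ! j)" for x
    using arrival_curve_increment[OF lam] w by simp
  moreover have "0 \<le> w i (route i ! j)" using w lam by simp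
  ultimately show "mono ?D" and "?B (t - (P + k)) \<le> ?D t"
    using work_conserving_lag[where act = "\<lambda>t. route i ! j \<in> mu t" and D = ?D and A = ?A,
      OF _ _ _ received_mono _ max_inter_sched_window[OF cyc k] received_lag _ _
      arrival_curve_mono[OF lam]]
    by (simp_all add: served_def received_def arrival_curve_def)
qed

lemma served_lag_along_route:
  assumes cyc: "cyclic_policy mu K" and lam: "0 \<le> lam i"
    and k: "\<forall>m<length (route i). max_inter_sched mu K (route i ! m) = enat (k m)"
    and w: "\<forall>m<length (route i). w i (route i ! m) = lam i * real (k m)"
  shows "j < length (route i) \<Longrightarrow> mono (served route lam T w mu i j) \<and>
    (\<forall>t. arrival_curve (lam i) T (t - (\<Sum>m\<le>j. k m)) \<le> served route lam T w mu i j t)"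
proof (induction j)
  case 0
  have "mono (received route lam T w mu i 0)"
    and "\<And>t. arrival_curve (lam i) T (t - 0) \<le> received route lam T w mu i 0 t"
    using arrival_curve_mono[OF lam] by (simp_all add: received_source)
  from served_lag_at_hop[where lam = lam and i = i and route = route and w = w and T = T,
      OF cyc lam 0 k[rule_format, OF 0] w[rule_format, OF 0] this]
  show ?case by simp
next
  case (Suc j)
  then have "j < length (route i)" by simp
  with Suc.IH Suc.prems have "mono (received route lam T w mu i (Suc j))"
    and "\<And>t. arrival_curve (lam i) T (t - (\<Sum>m\<le>j. k m)) \<le> received route lam T w mu i (Suc j) t"
    by (simp_all add: received_next_hop)
  from served_lag_at_hop[where lam = lam and i = i and route = route and w = w and T = T,
      OF cyc lam Suc.prems k[rule_format, OF Suc.prems] w[rule_format, OF Suc.prems] this]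
  show ?case by simp
qed

lemma arrived_eq_arrival_curve: "arrived lam T i t = arrival_curve (lam i) T (Suc t)"
proof (induction t)
  case 0
  show ?case by (simp add: arrived_def arrival_curve_def)
next
  case (Suc t)
  then show ?case
    by (cases "Suc t \<le> T") (auto simp: arrived_def arrival_curve_def algebra_simps)
qed

lemma delivered_eq_served:
  "delivered route lam T w mu i t = served route lam T w mu i (length (route i) - 1) (Suc t)"
  by (simp add: delivered_def served_def lessThan_Suc_atMost)

lemma sum_enat_le_enatD:
  fixes f :: "'a \<Rightarrow> enat"
  assumes "finite A" and le: "(\<Sum>x\<in>A. f x) \<le> enat n"
  shows "\<forall>x\<in>A. f x = enat (the_enat (f x))" and "(\<Sum>x\<in>A. the_enat (f x)) \<le> n"
proof -
  show fin: "\<forall>x\<in>A. f x = enat (the_enat (f x))"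
  proof
    fix x assume "x \<in> A"
    then have "f x \<le> enat n" using member_le_sum[of x A f] \<open>finite A\<close> le by auto
    then show "f x = enat (the_enat (f x))" by (cases "f x") auto
  qed
  have "(\<Sum>x\<in>A. f x) = (\<Sum>x\<in>A. of_nat (the_enat (f x)))"
    using fin by (simp add: of_nat_eq_enat)
  also have "\<dots> = of_nat (\<Sum>x\<in>A. the_enat (f x))" by simp
  finally show "(\<Sum>x\<in>A. the_enat (f x)) \<le> n" using le by (simp add: of_nat_eq_enat)
qed

lemma flow_meets_deadline:
  assumes cyc: "cyclic_policy mu K" and lam: "0 \<le> lam i"
    and route: "route i \<noteq> []" "distinct (route i)"
    and tau: "(\<Sum>e\<in>set (route i). max_inter_sched mu K e) \<le> enat (tau i)"
    and w: "\<forall>e\<in>set (route i). w i e = lam i * real (the_enat (max_inter_sched mu K e))"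
  shows "arrived lam T i t \<le> delivered route lam T w mu i (t + tau i)"
proof -
  define n where "n = length (route i)"
  define k where "k m = the_enat (max_inter_sched mu K (route i ! m))" for m
  note finite_k = sum_enat_le_enatD[OF finite_set tau]
  have "(\<Sum>m<n. k m) = (\<Sum>e\<in>set (route i). the_enat (max_inter_sched mu K e))"
    using sum_list_distinct_conv_sum_set[OF route(2)]
    by (simp add: k_def n_def sum_list_sum_nth atLeast0LessThan)
  with finite_k(2) have k_tau: "(\<Sum>m<n. k m) \<le> tau i" by simp
  have last: "n - 1 < length (route i)" and n: "Suc (n - 1) = n" using route(1) by (auto simp: n_def)
  have k_enat: "\<forall>m<length (route i). max_inter_sched mu K (route i ! m) = enat (k m)"
    using finite_k(1) by (simp add: k_def)
  have w_k: "\<forall>m<length (route i). w i (route i ! m) = lam i * real (k m)"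
    using w by (simp add: k_def)
  from served_lag_along_route[where lam = lam and i = i and route = route and w = w and T = T,
      OF cyc lam k_enat w_k last]
  have lag: "arrival_curve (lam i) T (t' - (\<Sum>m<n. k m)) \<le> served route lam T w mu i (n - 1) t'"
    for t' using n by (metis lessThan_Suc_atMost)
  have "arrived lam T i t = arrival_curve (lam i) T (Suc t)" by (rule arrived_eq_arrival_curve)
  also have "\<dots> \<le> arrival_curve (lam i) T (Suc (t + tau i) - (\<Sum>m<n. k m))"
    using k_tau by (intro monoD[OF arrival_curve_mono[OF lam]]) linarith
  also have "\<dots> \<le> served route lam T w mu i (n - 1) (Suc (t + tau i))"
    by (rule lag)
  also have "\<dots> = delivered route lam T w mu i (t + tau i)"
    by (simp add: delivered_eq_served n_def)
  finally show ?thesis .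
qed

lemma regular_schedule_max_inter_sched:
  assumes "regular_schedule E mu K" "e \<in> E" "max_inter_sched mu K e = enat k"
  shows "real k = 1 / mean_act mu K e"
  using assms unfolding regular_schedule_def by force

theorem corollary5:
  fixes E :: "('v \<times> 'v) set"
    and c :: "('v \<times> 'v) \<Rightarrow> real"
    and cf :: "('v \<times> 'v) \<Rightarrow> ('v \<times> 'v) \<Rightarrow> bool"
    and F :: "'f set"
    and route :: "'f \<Rightarrow> ('v \<times> 'v) list"
    and lam :: "'f \<Rightarrow> real"
    and tau :: "'f \<Rightarrow> nat"
    and w :: "'f \<Rightarrow> ('v \<times> 'v) \<Rightarrow> real"
    and mu :: "nat \<Rightarrow> ('v \<times> 'v) set"
    and K :: nat
  assumes "finite E"
    and "conflict_graph E cf"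
    and "finite F"
    and "\<forall>i\<in>F. valid_route E (route i)"
    and "\<forall>i\<in>F. lam i > 0"
    and "cyclic_policy mu K"
    and "\<forall>i\<in>F. (\<Sum>e\<in>set (route i). max_inter_sched mu K e) \<le> enat (tau i)"
    and "\<forall>e\<in>E. (\<Sum>i\<in>{i\<in>F. e \<in> set (route i)}. w i e) \<le> c e"
    and "\<forall>i\<in>F. \<forall>e\<in>set (route i). w i e = lam i * real (the_enat (max_inter_sched mu K e))"
    and "\<forall>t<K. mu t \<in> indep_sets E cf"
  shows "supports F route lam tau w mu \<and>
         (regular_schedule E mu K \<longrightarrow>
            (\<forall>i\<in>F. \<forall>e\<in>set (route i). w i e = lam i / mean_act mu K e))"
proof -
  note sched_le_tau = assms(7) and w = assms(9)
  have route: "route i \<noteq> []" "distinct (route i)" "set (route i) \<subseteq> E" if "i \<in> F" for i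
    using assms(4) that unfolding valid_route_def by auto
  have "supports F route lam tau w mu"
    unfolding supports_def
  proof (intro allI ballI)
    fix T i t assume i: "i \<in> F"
    show "arrived lam T i t \<le> delivered route lam T w mu i (t + tau i)"
      by (rule flow_meets_deadline[where lam = lam and i = i and route = route and w = w and tau = tau,
          OF assms(6) less_imp_le route(1,2)])
        (use i assms(5) sched_le_tau w in auto)
  qed
  moreover have "w i e = lam i / mean_act mu K e"
    if reg: "regular_schedule E mu K" and i: "i \<in> F" and e: "e \<in> set (route i)" for i e
  proof -
    have "max_inter_sched mu K e = enat (the_enat (max_inter_sched mu K e))"
      using sum_enat_le_enatD(1)[OF finite_set sched_le_tau[rule_format, OF i]] e by blast
    from regular_schedule_max_inter_sched[OF reg _ this] route(3)[OF i] e
    have "real (the_enat (max_inter_sched mu K e)) = 1 / mean_act mu K e" by blast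
    then show ?thesis using w i e by simp
  qed
  ultimately show ?thesis by blast
qed

end
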